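(* Let $A$ be a synaptic algebra, $p,q\in P$, $r:=(p\vee q)\wedge(p\vee q^{\perp})\wedge(p^{\perp}\vee q)\wedge(p^{\perp}\vee q^{\perp})$, $r_p:=p\wedge(p^{\perp}\vee q)\wedge(p^{\perp}\vee q^{\perp})$ and $r_q:=q\wedge(p\vee q^{\perp})\wedge(p^{\perp}\vee q^{\perp})$. Then $r_p=pr=rp=r\wedge p$ and $r_q=qr=rq=r\wedge q$ belong to $P[0,r]$, and $r_p$ and $r_q$ are in generic position in the synaptic algebra $rAr$; that is, $r_p\wedge r_q=r_p\wedge(r-r_q)=(r-r_p)\wedge r_q=(r-r_p)\wedge(r-r_q)=0$.
   Context: Synaptic algebra (Foulis): $R$ is a real linear associative algebra with unit $1$, and $A\subseteq R$ is a real linear subspace with $1\in A$. For $a,b\in A$ write $aCb$ iff $ab=ba$; $C(a):=\{b\in A: aCb\}$; $CC(a):=\{b\in A: bCd \text{ for all } d\in C(a)\}$. $A$ is a synaptic algebra with enveloping algebra $R$ iff: (SA1) $A$ is a partially ordered archimedean real linear space with positive cone $A^+$, $1$ is an order unit, $\|\cdot\|$ the order-unit norm; (SA2) $a\in A\Rightarrow a^2\in A^+$; (SA3) $a,b\in A^+\Rightarrow aba\in A^+$; (SA4) if $a\in A$, $b\in A^+$, $aba=0$ then $ab=ba=0$; (SA5) if $a\in A^+$ there is $b\in A^+\cap CC(a)$ with $b^2=a$; (SA6) for $a\in A$ there is $p=p^2\in A$ with $ab=0\Leftrightarrow pb=0$ for all $b\in A$; (SA7) if $1\le a$ there is $b\in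 A$ with $ab=ba=1$; (SA8) if $a,b\in A$, $a_1\le a_2\le\cdots$ are pairwise commuting elements of $C(b)$ with $\|a-a_n\|\to0$, then $a\in C(b)$. $A$ is nondegenerate. $P:=\{p\in A:p=p^2\}$ with the inherited order is an orthomodular lattice with $p^{\perp}:=1-p$, meet $\wedge$, join $\vee$. For $r\in P$, $rAr:=\{rar:a\in A\}=\{b\in A:b=br=rb\}$ is a synaptic algebra with unit $r$ (enveloping algebra $rRr$), whose projection lattice is $P[0,r]:=\{x\in P:x\le r\}$ with orthocomplement $x\mapsto r-x=x^{\perp}\wedge r$. Two projections $x,y$ of a synaptic algebra are in generic position iff $x\wedge y=x\wedge y'=x'\wedge y=x'\wedge y'=0$, where $'$ is the orthocomplement of that algebra. *)

theory Defs
  imports Main "HOL.Real_Vector_Spaces"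
begin

text \<open>The enveloping algebra R is the type 'a, a real
  linear associative algebra with unit (class real_algebra_1). A synaptic algebra is
  given by a carrier A (a real linear subspace of R containing 1) together with its
  positive cone Pos = A^+.\<close>

definition sa_le :: "'a::real_algebra_1 set \<Rightarrow> 'a \<Rightarrow> 'a \<Rightarrow> bool" where
  "sa_le Pos a b \<longleftrightarrow> b - a \<in> Pos"

definition order_unit_norm :: "'a::real_algebra_1 set \<Rightarrow> 'a \<Rightarrow> real" where
  "order_unit_norm Pos a =
     Inf {l::real. 0 < l \<and> sa_le Pos (- (l *\<^sub>R 1)) a \<and> sa_le Pos a (l *\<^sub>R 1)}"

definition commutant :: "'a::real_algebra_1 set \<Rightarrow> 'a \<Rightarrow> 'a set" where
  "commutant A a = {b \<in> A. a * b = b * a}"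

definition bicommutant :: "'a::real_algebra_1 set \<Rightarrow> 'a \<Rightarrow> 'a set" where
  "bicommutant A a = {b \<in> A. \<forall>d \<in> commutant A a. b * d = d * b}"

definition synaptic_algebra :: "'a::real_algebra_1 set \<Rightarrow> 'a set \<Rightarrow> bool" where
  "synaptic_algebra A Pos \<longleftrightarrow>
     \<comment> \<open>A is a real linear subspace of R containing 1\<close>
     (0 \<in> A \<and> 1 \<in> A \<and> (\<forall>a\<in>A. \<forall>b\<in>A. a + b \<in> A) \<and> (\<forall>c::real. \<forall>a\<in>A. c *\<^sub>R a \<in> A)) \<and>
     \<comment> \<open>SA1: partially ordered archimedean real linear space with positive cone Pos, 1 an order unit\<close>
     Pos \<subseteq> A \<and>
     (\<forall>a\<in>Pos. \<forall>b\<in>Pos. a + b \<in> Pos) \<and>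
     (\<forall>c::real. \<forall>a\<in>Pos. 0 \<le> c \<longrightarrow> c *\<^sub>R a \<in> Pos) \<and>
     (\<forall>a\<in>Pos. - a \<in> Pos \<longrightarrow> a = 0) \<and>
     (\<forall>a\<in>A. \<forall>b\<in>A. (\<forall>n::nat. sa_le Pos (of_nat n *\<^sub>R a) b) \<longrightarrow> sa_le Pos a 0) \<and>
     (\<forall>a\<in>A. \<exists>l::real. 0 < l \<and> sa_le Pos (- (l *\<^sub>R 1)) a \<and> sa_le Pos a (l *\<^sub>R 1)) \<and>
     \<comment> \<open>SA2\<close>
     (\<forall>a\<in>A. a * a \<in> Pos) \<and>
     \<comment> \<open>SA3\<close>
     (\<forall>a\<in>Pos. \<forall>b\<in>Pos. a * b * a \<in> Pos) \<and>
     \<comment> \<open>SA4\<close>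
     (\<forall>a\<in>A. \<forall>b\<in>Pos. a * b * a = 0 \<longrightarrow> a * b = 0 \<and> b * a = 0) \<and>
     \<comment> \<open>SA5\<close>
     (\<forall>a\<in>Pos. \<exists>b\<in>Pos \<inter> bicommutant A a. b * b = a) \<and>
     \<comment> \<open>SA6\<close>
     (\<forall>a\<in>A. \<exists>p\<in>A. p * p = p \<and> (\<forall>b\<in>A. a * b = 0 \<longleftrightarrow> p * b = 0)) \<and>
     \<comment> \<open>SA7\<close>
     (\<forall>a\<in>A. sa_le Pos 1 a \<longrightarrow> (\<exists>b\<in>A. a * b = 1 \<and> b * a = 1)) \<and>
     \<comment> \<open>SA8\<close>
     (\<forall>a\<in>A. \<forall>b\<in>A. \<forall>s::nat \<Rightarrow> 'a.
        (\<forall>n. s n \<in> commutant A b) \<and>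
        (\<forall>n. sa_le Pos (s n) (s (Suc n))) \<and>
        (\<forall>m n. s m * s n = s n * s m) \<and>
        (\<lambda>n. order_unit_norm Pos (a - s n)) \<longlonglongrightarrow> 0
        \<longrightarrow> a \<in> commutant A b)"

definition projections :: "'a::real_algebra_1 set \<Rightarrow> 'a set" where
  "projections A = {p \<in> A. p * p = p}"

definition pmeet :: "'a::real_algebra_1 set \<Rightarrow> 'a set \<Rightarrow> 'a \<Rightarrow> 'a \<Rightarrow> 'a" where
  "pmeet A Pos p q = (THE r. r \<in> projections A \<and> sa_le Pos r p \<and> sa_le Pos r q \<and>
     (\<forall>s\<in>projections A. sa_le Pos s p \<and> sa_le Pos s q \<longrightarrow> sa_le Pos s r))"

definition pjoin :: "'a::real_algebra_1 set \<Rightarrow> 'a set \<Rightarrow> 'a \<Rightarrow> 'a \<Rightarrow> 'a" where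
  "pjoin A Pos p q = (THE r. r \<in> projections A \<and> sa_le Pos p r \<and> sa_le Pos q r \<and>
     (\<forall>s\<in>projections A. sa_le Pos p s \<and> sa_le Pos q s \<longrightarrow> sa_le Pos r s))"

definition pperp :: "'a::real_algebra_1 \<Rightarrow> 'a" where
  "pperp p = 1 - p"

end

theory Submission
  imports Defs
begin

text \<open>For projections, \<open>e \<le> f\<close> holds iff \<open>e * f = e\<close>, and the join of \<open>e\<close> and \<open>f\<close>
  is the projection that SA6 attaches to \<open>e + f\<close>: by SA3 and SA4, \<open>(e + f) * b = 0\<close> iff
  \<open>e * b = 0\<close> and \<open>f * b = 0\<close> for every projection \<open>b\<close>. Meets are then given by \<open>e \<and> f = (e' \<or> f')'\<close>.
  If \<open>p\<close> commutes with \<open>e\<close> and \<open>f\<close>, then \<open>e \<or> f = (pe \<or> pf) + (p'e \<or> p'f)\<close> with the summands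
  below \<open>p\<close> and \<open>p'\<close> respectively, so \<open>p\<close> commutes with \<open>e \<or> f\<close> and with \<open>e \<and> f\<close>.
  Since \<open>p\<close> lies below \<open>p \<or> q\<close> and \<open>p \<or> q'\<close>, and \<open>p'\<close> below \<open>p' \<or> q\<close> and \<open>p' \<or> q'\<close>,
  \<open>p\<close> commutes with \<open>r\<close>; hence \<open>r \<and> p = r * p\<close> and \<open>r - r * p = r \<and> p'\<close>, while \<open>r \<and> p = r\<^sub>p\<close>
  because \<open>p \<le> p \<or> q, p \<or> q'\<close>. Finally each of the four meets lies below some \<open>a \<in> {p, p'}\<close>,
  some \<open>b \<in> {q, q'}\<close> and \<open>r \<le> a' \<or> b' \<le> (a \<and> b)'\<close>, so it lies below its own orthocomplement
  and is therefore \<open>0\<close>.\<close>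

locale weak_synaptic_algebra =
  fixes A Pos :: "'a::real_algebra_1 set"
  assumes one_mem: "1 \<in> A"
    and add_mem: "a \<in> A \<Longrightarrow> b \<in> A \<Longrightarrow> a + b \<in> A"
    and scaleR_mem: "a \<in> A \<Longrightarrow> c *\<^sub>R a \<in> A"
    and pos_subset: "Pos \<subseteq> A"
    and pos_add: "a \<in> Pos \<Longrightarrow> b \<in> Pos \<Longrightarrow> a + b \<in> Pos"
    and pos_antisym: "a \<in> Pos \<Longrightarrow> - a \<in> Pos \<Longrightarrow> a = 0"
    and square_pos: "a \<in> A \<Longrightarrow> a * a \<in> Pos"
    and sandwich_pos: "a \<in> Pos \<Longrightarrow> b \<in> Pos \<Longrightarrow> a * b * a \<in> Pos"
    and sandwich_eq_0D: "a \<in> A \<Longrightarrow> b \<in> Pos \<Longrightarrow> a * b * a = 0 \<Longrightarrow> a * b = 0 \<and> b * a = 0"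
    and annihilator_proj_ex:
      "a \<in> A \<Longrightarrow> \<exists>c\<in>A. c * c = c \<and> (\<forall>b\<in>A. a * b = 0 \<longleftrightarrow> c * b = 0)"

lemma synaptic_algebra_weak:
  assumes "synaptic_algebra A Pos"
  shows "weak_synaptic_algebra A Pos"
proof -
  have "1 \<in> A \<and> (\<forall>a\<in>A. \<forall>b\<in>A. a + b \<in> A) \<and> (\<forall>c::real. \<forall>a\<in>A. c *\<^sub>R a \<in> A) \<and>
    Pos \<subseteq> A \<and> (\<forall>a\<in>Pos. \<forall>b\<in>Pos. a + b \<in> Pos) \<and> (\<forall>a\<in>Pos. - a \<in> Pos \<longrightarrow> a = 0) \<and>
    (\<forall>a\<in>A. a * a \<in> Pos) \<and> (\<forall>a\<in>Pos. \<forall>b\<in>Pos. a * b * a \<in> Pos) \<and>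
    (\<forall>a\<in>A. \<forall>b\<in>Pos. a * b * a = 0 \<longrightarrow> a * b = 0 \<and> b * a = 0) \<and>
    (\<forall>a\<in>A. \<exists>c\<in>A. c * c = c \<and> (\<forall>b\<in>A. a * b = 0 \<longleftrightarrow> c * b = 0))"
    using assms unfolding synaptic_algebra_def by (elim conjE) (intro conjI; assumption)
  then show ?thesis
    by (intro weak_synaptic_algebra.intro) simp_all
qed

context weak_synaptic_algebra
begin

lemma diff_mem: "a \<in> A \<Longrightarrow> b \<in> A \<Longrightarrow> a - b \<in> A"
  using add_mem[of a "(-1) *\<^sub>R b"] scaleR_mem[of b "-1"] by simp

lemma sa_le_refl: "sa_le Pos a a"
  using square_pos[OF diff_mem[OF one_mem one_mem]] by (simp add: sa_le_def)

lemma sa_le_trans: "sa_le Pos a b \<Longrightarrow> sa_le Pos b c \<Longrightarrow> sa_le Pos a c"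
  using pos_add[of "b - a" "c - b"] by (simp add: sa_le_def)

lemma sa_le_antisym: "sa_le Pos a b \<Longrightarrow> sa_le Pos b a \<Longrightarrow> a = b"
  using pos_antisym[of "b - a"] by (simp add: sa_le_def)

lemma sa_le_compl_iff: "sa_le Pos (1 - b) (1 - a) \<longleftrightarrow> sa_le Pos a b"
  by (simp add: sa_le_def)

lemma pos_add_eq_0D: "a \<in> Pos \<Longrightarrow> b \<in> Pos \<Longrightarrow> a + b = 0 \<Longrightarrow> a = 0"
  using pos_antisym[of a] by (simp add: add_eq_0_iff)

lemma mult_eq_0_commute: "a \<in> A \<Longrightarrow> b \<in> Pos \<Longrightarrow> b * a = 0 \<Longrightarrow> a * b = 0"
  using sandwich_eq_0D[of a b] by (simp add: mult.assoc)

lemma projectionsD: "e \<in> projections A \<Longrightarrow> e \<in> A \<and> e * e = e"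
  by (simp add: projections_def)

lemma projections_pos: "e \<in> projections A \<Longrightarrow> e \<in> Pos"
  using square_pos projectionsD by metis

lemma projections_compl: "e \<in> projections A \<Longrightarrow> 1 - e \<in> projections A"
  using diff_mem[OF one_mem] by (auto simp: projections_def algebra_simps)

lemma projections_mult_eq_left_iff:
  assumes "e \<in> projections A" "f \<in> projections A"
  shows "e * f = e \<longleftrightarrow> f * e = e"
proof -
  have "e * f = e \<longleftrightarrow> e * (1 - f) = 0" by (auto simp: algebra_simps)
  also have "\<dots> \<longleftrightarrow> (1 - f) * e = 0"
    using assms mult_eq_0_commute projections_compl projections_pos pos_subset
    by (metis projectionsD)
  also have "\<dots> \<longleftrightarrow> f * e = e" by (auto simp: algebra_simps)
  finally show ?thesis .
qed

lemma projections_le_iff: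
  assumes e: "e \<in> projections A" and f: "f \<in> projections A"
  shows "sa_le Pos e f \<longleftrightarrow> e * f = e"
proof
  assume "sa_le Pos e f"
  then have "f - e \<in> Pos" by (simp add: sa_le_def)
  define g where "g = 1 - f"
  have g: "g \<in> projections A" using projections_compl[OF f] by (simp add: g_def)
  have "g * (f - e) * g = - (g * e * g)"
    using projectionsD[OF f] by (simp add: g_def algebra_simps)
  then have "- (g * e * g) \<in> Pos"
    using sandwich_pos[OF projections_pos[OF g] \<open>f - e \<in> Pos\<close>] by simp
  then have "g * e * g = 0"
    using pos_antisym sandwich_pos projections_pos e g by blast
  then have "e * g = 0"
    using sandwich_eq_0D projections_pos projectionsD e g by blast
  then show "e * f = e" by (simp add: g_def algebra_simps)
next
  assume ef: "e * f = e"
  then have "f * e = e" using projections_mult_eq_left_iff[OF e f] by simp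
  with ef have "(f - e) * (f - e) = f - e"
    using projectionsD[OF e] projectionsD[OF f] by (simp add: algebra_simps)
  then show "sa_le Pos e f"
    using square_pos[OF diff_mem] projectionsD[OF e] projectionsD[OF f]
    by (metis sa_le_def)
qed

lemma projections_le_mult:
  assumes "e \<in> projections A" "f \<in> projections A" "sa_le Pos e f"
  shows "e * f = e" "f * e = e"
  using assms projections_le_iff projections_mult_eq_left_iff by blast+

lemma projections_le_commute:
  "e \<in> projections A \<Longrightarrow> f \<in> projections A \<Longrightarrow> sa_le Pos e f \<Longrightarrow> e * f = f * e"
  using projections_le_mult by metis

lemma projections_le_iff_mult_compl_eq_0:
  "e \<in> projections A \<Longrightarrow> f \<in> projections A \<Longrightarrow> sa_le Pos e f \<longleftrightarrow> e * (1 - f) = 0"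
  by (auto simp: projections_le_iff algebra_simps)

lemma projections_eqI:
  assumes "e \<in> projections A" "f \<in> projections A"
    and "\<And>s. s \<in> projections A \<Longrightarrow> sa_le Pos s e \<longleftrightarrow> sa_le Pos s f"
  shows "e = f"
  using assms sa_le_refl sa_le_antisym by blast

lemma add_mult_eq_0_iff:
  assumes e: "e \<in> Pos" and f: "f \<in> Pos" and g: "g \<in> Pos"
  shows "(e + f) * g = 0 \<longleftrightarrow> e * g = 0 \<and> f * g = 0"
proof
  assume "(e + f) * g = 0"
  then have "g * e * g + g * f * g = 0"
    by (metis distrib_left distrib_right mult.assoc mult_zero_right)
  moreover have "g * e * g \<in> Pos" "g * f * g \<in> Pos"
    using sandwich_pos g e f by blast+
  ultimately have "g * e * g = 0" "g * f * g = 0"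
    using pos_add_eq_0D[of "g * e * g" "g * f * g"] pos_add_eq_0D[of "g * f * g" "g * e * g"]
    by (simp_all add: add.commute)
  then show "e * g = 0 \<and> f * g = 0"
    using sandwich_eq_0D[of g e] sandwich_eq_0D[of g f] e f g pos_subset by blast
qed (simp add: distrib_right)

lemma pjoin_ex:
  assumes e: "e \<in> projections A" and f: "f \<in> projections A"
  shows "\<exists>c\<in>projections A. \<forall>s\<in>projections A. sa_le Pos c s \<longleftrightarrow> sa_le Pos e s \<and> sa_le Pos f s"
proof -
  have "e + f \<in> A" using add_mem projectionsD e f by blast
  then obtain c where "c \<in> A" "c * c = c" and c: "\<And>b. b \<in> A \<Longrightarrow> (e + f) * b = 0 \<longleftrightarrow> c * b = 0"
    using annihilator_proj_ex by blast
  then have cP: "c \<in> projections A" by (simp add: projections_def)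
  have "sa_le Pos c s \<longleftrightarrow> sa_le Pos e s \<and> sa_le Pos f s" if s: "s \<in> projections A" for s
  proof -
    have s': "1 - s \<in> projections A" using projections_compl[OF s] .
    have "sa_le Pos c s \<longleftrightarrow> c * (1 - s) = 0"
      using projections_le_iff_mult_compl_eq_0[OF cP s] .
    also have "\<dots> \<longleftrightarrow> (e + f) * (1 - s) = 0"
      using c projectionsD[OF s'] by simp
    also have "\<dots> \<longleftrightarrow> e * (1 - s) = 0 \<and> f * (1 - s) = 0"
      using add_mult_eq_0_iff projections_pos e f s' by simp
    also have "\<dots> \<longleftrightarrow> sa_le Pos e s \<and> sa_le Pos f s"
      using projections_le_iff_mult_compl_eq_0 e f s by simp
    finally show ?thesis .
  qed
  with cP show ?thesis by blast
qed

lemma pjoin_eqI: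
  assumes c: "c \<in> projections A"
    and le_c: "\<And>s. s \<in> projections A \<Longrightarrow> sa_le Pos c s \<longleftrightarrow> sa_le Pos e s \<and> sa_le Pos f s"
  shows "pjoin A Pos e f = c"
  unfolding pjoin_def
proof (rule the_equality)
  show "c \<in> projections A \<and> sa_le Pos e c \<and> sa_le Pos f c \<and>
      (\<forall>s\<in>projections A. sa_le Pos e s \<and> sa_le Pos f s \<longrightarrow> sa_le Pos c s)"
    using c le_c[OF c] le_c sa_le_refl by blast
  fix r assume "r \<in> projections A \<and> sa_le Pos e r \<and> sa_le Pos f r \<and>
      (\<forall>s\<in>projections A. sa_le Pos e s \<and> sa_le Pos f s \<longrightarrow> sa_le Pos r s)"
  with c le_c[OF c] le_c[of r] sa_le_refl have "sa_le Pos r c" "sa_le Pos c r" by blast+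
  then show "r = c" by (rule sa_le_antisym)
qed

lemma
  assumes "e \<in> projections A" "f \<in> projections A"
  shows pjoin_mem: "pjoin A Pos e f \<in> projections A"
    and pjoin_le_iff: "s \<in> projections A \<Longrightarrow>
      sa_le Pos (pjoin A Pos e f) s \<longleftrightarrow> sa_le Pos e s \<and> sa_le Pos f s"
proof -
  obtain c where "c \<in> projections A"
    and "\<And>s. s \<in> projections A \<Longrightarrow> sa_le Pos c s \<longleftrightarrow> sa_le Pos e s \<and> sa_le Pos f s"
    using pjoin_ex[OF assms] by blast
  moreover from this have "pjoin A Pos e f = c" by (rule pjoin_eqI)
  ultimately show "pjoin A Pos e f \<in> projections A"
    and "s \<in> projections A \<Longrightarrow> sa_le Pos (pjoin A Pos e f) s \<longleftrightarrow> sa_le Pos e s \<and> sa_le Pos f s"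
    by simp_all
qed

lemma
  assumes "e \<in> projections A" "f \<in> projections A"
  shows le_pjoin1: "sa_le Pos e (pjoin A Pos e f)"
    and le_pjoin2: "sa_le Pos f (pjoin A Pos e f)"
  using pjoin_le_iff[OF assms pjoin_mem[OF assms]] sa_le_refl by blast+

lemma pjoin_commute:
  assumes "e \<in> projections A" "f \<in> projections A"
  shows "pjoin A Pos e f = pjoin A Pos f e"
  using assms by (intro pjoin_eqI) (auto simp: pjoin_mem pjoin_le_iff)

lemma pmeet_eqI:
  assumes c: "c \<in> projections A"
    and c_le: "\<And>s. s \<in> projections A \<Longrightarrow> sa_le Pos s c \<longleftrightarrow> sa_le Pos s e \<and> sa_le Pos s f"
  shows "pmeet A Pos e f = c"
  unfolding pmeet_def
proof (rule the_equality)
  show "c \<in> projections A \<and> sa_le Pos c e \<and> sa_le Pos c f \<and>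
      (\<forall>s\<in>projections A. sa_le Pos s e \<and> sa_le Pos s f \<longrightarrow> sa_le Pos s c)"
    using c c_le[OF c] c_le sa_le_refl by blast
  fix r assume "r \<in> projections A \<and> sa_le Pos r e \<and> sa_le Pos r f \<and>
      (\<forall>s\<in>projections A. sa_le Pos s e \<and> sa_le Pos s f \<longrightarrow> sa_le Pos s r)"
  with c c_le[OF c] c_le[of r] sa_le_refl have "sa_le Pos r c" "sa_le Pos c r" by blast+
  then show "r = c" by (rule sa_le_antisym)
qed

lemma le_compl_pjoin_compl_iff:
  assumes e: "e \<in> projections A" and f: "f \<in> projections A" and s: "s \<in> projections A"
  shows "sa_le Pos s (1 - pjoin A Pos (1 - e) (1 - f)) \<longleftrightarrow> sa_le Pos s e \<and> sa_le Pos s f"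
proof -
  have "sa_le Pos s (1 - pjoin A Pos (1 - e) (1 - f)) \<longleftrightarrow>
      sa_le Pos (pjoin A Pos (1 - e) (1 - f)) (1 - s)"
    using sa_le_compl_iff[where a = s and b = "1 - pjoin A Pos (1 - e) (1 - f)"] by simp
  also have "\<dots> \<longleftrightarrow> sa_le Pos (1 - e) (1 - s) \<and> sa_le Pos (1 - f) (1 - s)"
    using pjoin_le_iff projections_compl e f s by blast
  finally show ?thesis by (simp add: sa_le_compl_iff)
qed

lemma pmeet_eq_compl_pjoin:
  assumes "e \<in> projections A" "f \<in> projections A"
  shows "pmeet A Pos e f = 1 - pjoin A Pos (1 - e) (1 - f)"
  using assms
  by (intro pmeet_eqI) (simp_all add: le_compl_pjoin_compl_iff projections_compl pjoin_mem)

lemma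
  assumes "e \<in> projections A" "f \<in> projections A"
  shows pmeet_mem: "pmeet A Pos e f \<in> projections A"
    and le_pmeet_iff: "s \<in> projections A \<Longrightarrow>
      sa_le Pos s (pmeet A Pos e f) \<longleftrightarrow> sa_le Pos s e \<and> sa_le Pos s f"
  using assms
  by (simp_all add: pmeet_eq_compl_pjoin le_compl_pjoin_compl_iff projections_compl pjoin_mem)

lemma
  assumes "e \<in> projections A" "f \<in> projections A"
  shows pmeet_le1: "sa_le Pos (pmeet A Pos e f) e"
    and pmeet_le2: "sa_le Pos (pmeet A Pos e f) f"
  using le_pmeet_iff[OF assms pmeet_mem[OF assms]] sa_le_refl by blast+

lemma commuting_mult_mem:
  assumes e: "e \<in> projections A" and f: "f \<in> projections A" and ef: "e * f = f * e"
  shows "e * f \<in> projections A"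
proof -
  have "(e + f) * (e + f) - e - f = 2 *\<^sub>R (e * f)"
    using projectionsD[OF e] projectionsD[OF f] ef by (simp add: algebra_simps scaleR_2)
  moreover have "(e + f) * (e + f) - e - f \<in> A"
    using e f projectionsD pos_subset square_pos add_mem diff_mem by (meson subsetD)
  ultimately have "(1 / 2) *\<^sub>R (2 *\<^sub>R (e * f)) \<in> A"
    by (metis scaleR_mem)
  then have "e * f \<in> A" by simp
  moreover have "e * f * (e * f) = e * f"
    using projectionsD[OF e] projectionsD[OF f] ef by (metis mult.assoc)
  ultimately show ?thesis by (simp add: projections_def)
qed

lemma pmeet_commuting_eq_mult:
  assumes e: "e \<in> projections A" and f: "f \<in> projections A" and ef: "e * f = f * e"
  shows "pmeet A Pos e f = e * f"
proof (rule pmeet_eqI)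
  show ef_mem: "e * f \<in> projections A" using commuting_mult_mem[OF assms] .
  fix s assume s: "s \<in> projections A"
  have "s * (e * f) = s \<longleftrightarrow> s * e = s \<and> s * f = s"
    using projectionsD[OF e] projectionsD[OF f] ef by (metis mult.assoc)
  then show "sa_le Pos s (e * f) \<longleftrightarrow> sa_le Pos s e \<and> sa_le Pos s f"
    using projections_le_iff s e f ef_mem by simp
qed

lemma orthogonal_add_mem:
  assumes e: "e \<in> projections A" and f: "f \<in> projections A" and ef: "e * f = 0"
  shows "e + f \<in> projections A"
proof -
  have "f * e = 0"
    using mult_eq_0_commute e f ef projectionsD projections_pos by blast
  with ef show ?thesis
    using projectionsD[OF e] projectionsD[OF f] add_mem
    by (simp add: projections_def algebra_simps)
qed

lemma pjoin_mono:
  assumes "e \<in> projections A" "e' \<in> projections A" "f \<in> projections A" "f' \<in> projections A"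
    and "sa_le Pos e e'" "sa_le Pos f f'"
  shows "sa_le Pos (pjoin A Pos e f) (pjoin A Pos e' f')"
  using assms by (simp add: pjoin_le_iff pjoin_mem) (meson le_pjoin1 le_pjoin2 sa_le_trans)

lemma
  assumes "e \<in> projections A" "f \<in> projections A" "e * f = f * e"
  shows commuting_mult_le1: "sa_le Pos (e * f) e"
    and commuting_mult_le2: "sa_le Pos (e * f) f"
  using pmeet_le1[OF assms(1,2)] pmeet_le2[OF assms(1,2)] pmeet_commuting_eq_mult[OF assms] by simp_all

lemma pjoin_commuting_mult:
  assumes q: "q \<in> projections A" and e: "e \<in> projections A" and f: "f \<in> projections A"
    and qe: "q * e = e * q" and qf: "q * f = f * q"
  shows "pjoin A Pos (q * e) (q * f) \<in> projections A"
    and "sa_le Pos (pjoin A Pos (q * e) (q * f)) q"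
    and "sa_le Pos (pjoin A Pos (q * e) (q * f)) (pjoin A Pos e f)"
proof -
  have mem: "q * e \<in> projections A" "q * f \<in> projections A"
    using commuting_mult_mem q e f qe qf by blast+
  then show "pjoin A Pos (q * e) (q * f) \<in> projections A" by (rule pjoin_mem)
  show "sa_le Pos (pjoin A Pos (q * e) (q * f)) q"
    using mem q commuting_mult_le1 q e f qe qf by (simp add: pjoin_le_iff)
  show "sa_le Pos (pjoin A Pos (q * e) (q * f)) (pjoin A Pos e f)"
    using mem pjoin_mono commuting_mult_le2 q e f qe qf by blast
qed

lemma le_add_if_parts_le:
  assumes x: "x \<in> projections A" and p: "p \<in> projections A" and px: "p * x = x * p"
    and c1: "c1 \<in> projections A" "sa_le Pos c1 p" "sa_le Pos (p * x) c1"
    and c2: "c2 \<in> projections A" "sa_le Pos c2 (1 - p)" "sa_le Pos ((1 - p) * x) c2"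
    and c12: "c1 + c2 \<in> projections A"
  shows "sa_le Pos x (c1 + c2)"
proof -
  have p': "1 - p \<in> projections A" using projections_compl[OF p] .
  have p'x: "(1 - p) * x = x * (1 - p)" using px by (simp add: algebra_simps)
  then have "p * x \<in> projections A" "(1 - p) * x \<in> projections A"
    using commuting_mult_mem p p' x px by blast+
  then have "p * x * c1 = p * x" "(1 - p) * x * c2 = (1 - p) * x"
    using projections_le_mult c1 c2 by blast+
  moreover have "p * c1 = c1" "(1 - p) * c2 = c2"
    using projections_le_mult c1 c2 p p' by blast+
  then have "x * c1 = p * x * c1" "x * c2 = (1 - p) * x * c2"
    using px p'x by (metis mult.assoc)+
  ultimately have "x * c1 = p * x" "x * c2 = (1 - p) * x" by simp_all
  then have "x * (c1 + c2) = x" by (simp add: distrib_left algebra_simps)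
  then show ?thesis using projections_le_iff x c12 by blast
qed

lemma mult_pjoin_commute:
  assumes p: "p \<in> projections A" and e: "e \<in> projections A" and f: "f \<in> projections A"
    and pe: "p * e = e * p" and pf: "p * f = f * p"
  shows "p * pjoin A Pos e f = pjoin A Pos e f * p"
proof -
  define j c1 c2 where "j = pjoin A Pos e f"
    and "c1 = pjoin A Pos (p * e) (p * f)" and "c2 = pjoin A Pos ((1 - p) * e) ((1 - p) * f)"
  have p': "1 - p \<in> projections A" using projections_compl[OF p] .
  have p'e: "(1 - p) * e = e * (1 - p)" and p'f: "(1 - p) * f = f * (1 - p)"
    using pe pf by (simp_all add: algebra_simps)
  have j: "j \<in> projections A" using pjoin_mem e f j_def by blast
  have c1: "c1 \<in> projections A" "sa_le Pos c1 p" "sa_le Pos c1 j"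
    using pjoin_commuting_mult[OF p e f pe pf] c1_def j_def by simp_all
  have c2: "c2 \<in> projections A" "sa_le Pos c2 (1 - p)" "sa_le Pos c2 j"
    using pjoin_commuting_mult[OF p' e f p'e p'f] c2_def j_def by simp_all
  have "c1 * p = c1" "p * c1 = c1" "c2 * (1 - p) = c2" "(1 - p) * c2 = c2"
    using projections_le_mult c1 c2 p p' by blast+
  then have c1p: "c1 * p = c1" "p * c1 = c1" and c2p: "c2 * p = 0" "p * c2 = 0"
    by (simp_all add: algebra_simps)
  then have "c1 * c2 = 0" by (metis mult.assoc mult_zero_right)
  then have c12: "c1 + c2 \<in> projections A" using orthogonal_add_mem c1 c2 by blast
  have "(c1 + c2) * j = c1 + c2"
    using projections_le_mult c1 c2 j by (simp add: distrib_right)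
  then have "sa_le Pos (c1 + c2) j" using projections_le_iff c12 j by blast
  moreover have "sa_le Pos x (c1 + c2)" if "x \<in> {e, f}" for x
  proof (rule le_add_if_parts_le[OF _ p _ c1(1,2) _ c2(1,2) _ c12])
    show "x \<in> projections A" "p * x = x * p" using that e f pe pf by auto
    show "sa_le Pos (p * x) c1" "sa_le Pos ((1 - p) * x) c2"
      using that e f pe pf p'e p'f c1_def c2_def commuting_mult_mem p p'
      by (auto simp: le_pjoin1 le_pjoin2)
  qed
  then have "sa_le Pos j (c1 + c2)" using pjoin_le_iff[OF e f c12] j_def by blast
  ultimately have "j = c1 + c2" by (rule sa_le_antisym[rotated])
  then show ?thesis
    using c1p c2p j_def by (simp add: distrib_left distrib_right)
qed

lemma mult_pmeet_commute:
  assumes p: "p \<in> projections A" and e: "e \<in> projections A" and f: "f \<in> projections A"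
    and pe: "p * e = e * p" and pf: "p * f = f * p"
  shows "p * pmeet A Pos e f = pmeet A Pos e f * p"
proof -
  have "p * (1 - e) = (1 - e) * p" "p * (1 - f) = (1 - f) * p"
    using pe pf by (simp_all add: algebra_simps)
  then have "p * pjoin A Pos (1 - e) (1 - f) = pjoin A Pos (1 - e) (1 - f) * p"
    using mult_pjoin_commute p projections_compl e f by blast
  then show ?thesis
    unfolding pmeet_eq_compl_pjoin[OF e f] by (simp add: algebra_simps)
qed

lemma pmeet_compl_eq_diff:
  assumes "e \<in> projections A" "f \<in> projections A" "e * f = f * e"
  shows "pmeet A Pos e (1 - f) = e - pmeet A Pos e f"
proof -
  have "e * (1 - f) = (1 - f) * e" using assms(3) by (simp add: algebra_simps)
  then show ?thesis
    using assms pmeet_commuting_eq_mult projections_compl by (simp add: algebra_simps)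
qed

lemma projections_le_compl_self: "e \<in> projections A \<Longrightarrow> sa_le Pos e (1 - e) \<Longrightarrow> e = 0"
  using projections_le_iff_mult_compl_eq_0 projections_compl projectionsD by fastforce

lemma eq_0_if_le_pjoin_compl:
  assumes m: "m \<in> projections A" and a: "a \<in> projections A" and b: "b \<in> projections A"
    and "sa_le Pos m a" "sa_le Pos m b" "sa_le Pos m (pjoin A Pos (1 - a) (1 - b))"
  shows "m = 0"
proof -
  have "sa_le Pos (1 - a) (1 - m)" "sa_le Pos (1 - b) (1 - m)"
    using assms(4,5) by (simp_all add: sa_le_compl_iff)
  then have "sa_le Pos (pjoin A Pos (1 - a) (1 - b)) (1 - m)"
    using pjoin_le_iff projections_compl a b m by blast
  then show "m = 0"
    using projections_le_compl_self[OF m] sa_le_trans assms(6) by blast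
qed

definition generic_part :: "'a \<Rightarrow> 'a \<Rightarrow> 'a" where
  "generic_part p q = pmeet A Pos (pmeet A Pos (pmeet A Pos
      (pjoin A Pos p q) (pjoin A Pos p (1 - q))) (pjoin A Pos (1 - p) q)) (pjoin A Pos (1 - p) (1 - q))"

context
  fixes p q
  assumes p: "p \<in> projections A" and q: "q \<in> projections A"
begin

lemma generic_part_mem: "generic_part p q \<in> projections A"
  using p q by (simp add: generic_part_def pmeet_mem pjoin_mem projections_compl)

lemma le_generic_part_iff:
  "s \<in> projections A \<Longrightarrow> sa_le Pos s (generic_part p q) \<longleftrightarrow>
    sa_le Pos s (pjoin A Pos p q) \<and> sa_le Pos s (pjoin A Pos p (1 - q)) \<and>
    sa_le Pos s (pjoin A Pos (1 - p) q) \<and> sa_le Pos s (pjoin A Pos (1 - p) (1 - q))"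
  using p q by (simp add: generic_part_def le_pmeet_iff pmeet_mem pjoin_mem projections_compl)

lemma mult_generic_part_commute: "p * generic_part p q = generic_part p q * p"
proof -
  have p': "1 - p \<in> projections A" and q': "1 - q \<in> projections A"
    using projections_compl p q by blast+
  have "p * pjoin A Pos p x = pjoin A Pos p x * p" if "x \<in> projections A" for x
    using projections_le_commute le_pjoin1 pjoin_mem p that by blast
  moreover have "p * pjoin A Pos (1 - p) x = pjoin A Pos (1 - p) x * p"
    if "x \<in> projections A" for x
  proof -
    have "(1 - p) * pjoin A Pos (1 - p) x = pjoin A Pos (1 - p) x * (1 - p)"
      using projections_le_commute le_pjoin1 pjoin_mem p' that by blast
    then show ?thesis by (simp add: algebra_simps)
  qed
  ultimately show ?thesis
    unfolding generic_part_def
    using p q p' q' by (intro mult_pmeet_commute) (simp_all add: pmeet_mem pjoin_mem)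
qed

lemma pmeet_generic_part_left:
  "pmeet A Pos (generic_part p q) p =
    pmeet A Pos (pmeet A Pos p (pjoin A Pos (1 - p) q)) (pjoin A Pos (1 - p) (1 - q))"
proof (rule projections_eqI)
  have p': "1 - p \<in> projections A" and q': "1 - q \<in> projections A"
    using projections_compl p q by blast+
  then show "pmeet A Pos (generic_part p q) p \<in> projections A"
    and "pmeet A Pos (pmeet A Pos p (pjoin A Pos (1 - p) q)) (pjoin A Pos (1 - p) (1 - q))
      \<in> projections A"
    using generic_part_mem p q by (simp_all add: pmeet_mem pjoin_mem)
  fix s assume s: "s \<in> projections A"
  have "sa_le Pos s (pjoin A Pos p x)" if "sa_le Pos s p" "x \<in> projections A" for x
    using sa_le_trans le_pjoin1 p that by blast
  then show "sa_le Pos s (pmeet A Pos (generic_part p q) p) \<longleftrightarrow>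
      sa_le Pos s (pmeet A Pos (pmeet A Pos p (pjoin A Pos (1 - p) q)) (pjoin A Pos (1 - p) (1 - q)))"
    using s p q p' q'
    by (auto simp: le_pmeet_iff le_generic_part_iff generic_part_mem pmeet_mem pjoin_mem)
qed

end

lemma generic_part_commute:
  assumes "p \<in> projections A" "q \<in> projections A"
  shows "generic_part p q = generic_part q p"
  using assms
  by (intro projections_eqI generic_part_mem)
    (auto simp: le_generic_part_iff pjoin_commute projections_compl)

lemma pmeet_generic_part_right:
  assumes "p \<in> projections A" "q \<in> projections A"
  shows "pmeet A Pos (generic_part p q) q =
    pmeet A Pos (pmeet A Pos q (pjoin A Pos p (1 - q))) (pjoin A Pos (1 - p) (1 - q))"
  using assms pmeet_generic_part_left[OF assms(2,1)]
  by (simp add: generic_part_commute pjoin_commute projections_compl)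

lemma pmeet_pmeet_eq_0_if_le_pjoin_compl:
  assumes r: "r \<in> projections A" and a: "a \<in> projections A" and b: "b \<in> projections A"
    and "sa_le Pos r (pjoin A Pos (1 - a) (1 - b))"
  shows "pmeet A Pos (pmeet A Pos r a) (pmeet A Pos r b) = 0"
proof (rule eq_0_if_le_pjoin_compl[OF _ a b])
  have ra: "pmeet A Pos r a \<in> projections A" and rb: "pmeet A Pos r b \<in> projections A"
    using pmeet_mem r a b by blast+
  then show m: "pmeet A Pos (pmeet A Pos r a) (pmeet A Pos r b) \<in> projections A"
    using pmeet_mem by blast
  show "sa_le Pos (pmeet A Pos (pmeet A Pos r a) (pmeet A Pos r b)) a"
    and "sa_le Pos (pmeet A Pos (pmeet A Pos r a) (pmeet A Pos r b)) b"
    and "sa_le Pos (pmeet A Pos (pmeet A Pos r a) (pmeet A Pos r b)) (pjoin A Pos (1 - a) (1 - b))"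
    using m ra rb r a b assms(4) sa_le_refl sa_le_trans by (meson le_pmeet_iff)+
qed

end

theorem theorem6p4:
  fixes A Pos :: "'a::real_algebra_1 set" and p q :: 'a
  assumes SA: "synaptic_algebra A Pos"
    and p: "p \<in> projections A" and q: "q \<in> projections A"
  defines "r \<equiv> pmeet A Pos (pmeet A Pos (pmeet A Pos (pjoin A Pos p q) (pjoin A Pos p (pperp q)))
                   (pjoin A Pos (pperp p) q)) (pjoin A Pos (pperp p) (pperp q))"
    and "rp \<equiv> pmeet A Pos (pmeet A Pos p (pjoin A Pos (pperp p) q)) (pjoin A Pos (pperp p) (pperp q))"
    and "rq \<equiv> pmeet A Pos (pmeet A Pos q (pjoin A Pos p (pperp q))) (pjoin A Pos (pperp p) (pperp q))"
  shows "rp = p * r \<and> rp = r * p \<and> rp = pmeet A Pos r p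
     \<and> rq = q * r \<and> rq = r * q \<and> rq = pmeet A Pos r q
     \<and> rp \<in> projections A \<and> sa_le Pos rp r
     \<and> rq \<in> projections A \<and> sa_le Pos rq r
     \<and> pmeet A Pos rp rq = 0
     \<and> pmeet A Pos rp (r - rq) = 0
     \<and> pmeet A Pos (r - rp) rq = 0
     \<and> pmeet A Pos (r - rp) (r - rq) = 0"
proof -
  interpret weak_synaptic_algebra A Pos using synaptic_algebra_weak[OF SA] .
  have r_eq: "r = generic_part p q" unfolding r_def generic_part_def pperp_def ..
  have r: "r \<in> projections A" using generic_part_mem[OF p q] r_eq by simp
  have rp_eq: "rp = pmeet A Pos r p" and rq_eq: "rq = pmeet A Pos r q"
    using pmeet_generic_part_left[OF p q] pmeet_generic_part_right[OF p q]
    unfolding r_eq rp_def rq_def pperp_def by simp_all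
  have "r * p = p * r" "r * q = q * r"
    using mult_generic_part_commute[OF p q] mult_generic_part_commute[OF q p]
      generic_part_commute[OF p q]
    unfolding r_eq by simp_all
  then have mult: "pmeet A Pos r p = r * p" "pmeet A Pos r q = r * q"
    and compl: "r - rp = pmeet A Pos r (1 - p)" "r - rq = pmeet A Pos r (1 - q)"
    using pmeet_commuting_eq_mult pmeet_compl_eq_diff r p q unfolding rp_eq rq_eq by simp_all
  have "sa_le Pos r (pjoin A Pos (1 - a) (1 - b))"
    if "a \<in> {p, 1 - p}" "b \<in> {q, 1 - q}" for a b
    using that le_generic_part_iff[OF p q r] sa_le_refl r_eq by auto
  then have generic: "pmeet A Pos (pmeet A Pos r a) (pmeet A Pos r b) = 0"
    if "a \<in> {p, 1 - p}" "b \<in> {q, 1 - q}" for a b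
    using that pmeet_pmeet_eq_0_if_le_pjoin_compl r p q projections_compl by blast
  have "rp \<in> projections A" "sa_le Pos rp r" "rq \<in> projections A" "sa_le Pos rq r"
    using pmeet_mem pmeet_le1 r p q unfolding rp_eq rq_eq by blast+
  with mult compl generic[of p q] generic[of p "1 - q"] generic[of "1 - p" q]
    generic[of "1 - p" "1 - q"] \<open>r * p = p * r\<close> \<open>r * q = q * r\<close>
  show ?thesis
    unfolding rp_eq rq_eq by simp
qed

end
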